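(* Let $F=A^\sharp\circ B\circ P$, i.e. $F(x)=A^\sharp(B\odot(Px))$ for $x\in\mathbb{T}^n$, where $A\in\mathbb{T}^{m\times n}$ has at least one finite entry per column, $B\in\mathbb{T}^{m\times q}$ has at least one finite entry per row, the finite entries of $A$ and $B$ are integers, and $P\in\mathbb{R}^{q\times n}$ is row-stochastic with $P_{il}=Q_{il}/M$ for integers $Q_{il}$ and a positive integer $M$. Suppose that $F$ has a bias vector and that $\rho(F)\ne0$. Let $k$ be the number of nondeterministic states. Then $\operatorname{cond}(F)=|\rho(F)|^{-1}\le nM^{\min\{k,n-1\}}$.
   Context: $\mathbb{T}=\mathbb{R}\cup\{-\infty\}$. For $C\in\mathbb{T}^{r\times s}$, $z\in\mathbb{T}^s$: $(C\odot z)_i=\max_j(C_{ij}+z_j)$; the adjoint is $C^\sharp(y)_j=\min_i(-C_{ij}+y_i)$, with $(+\infty)+(-\infty)=+\infty$. $Pz$ is the usual matrix-vector product with $0\cdot(-\infty)=0$. Row-stochastic: nonnegative entries, rows summing to $1$. A state $i\in\{1,\dots,q\}$ is nondeterministic if there are at least two indices $l\ne l'$ in $\{1,\dots,n\}$ with $P_{il}>0$ and $P_{il'}>0$. A bias vector is $v\in\mathbb{R}^n$ with $F(v)=\lambda+v$ for some $\lambda\in\mathbb{R}$ (entrywise addition); this $\lambda$ is unique and is the ergodic constant $\rho(F)$. $\operatorname{cond}(F)$ denotes $|\rho(F)|^{-1}$. *)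

theory Defs
  imports "HOL-Analysis.Analysis"
begin

text \<open>Tropical semiring T = R \<union> {-\<infinity>}, represented inside ereal.
  Vectors are functions nat \<Rightarrow> _ indexed by 0..<dim, matrices nat \<Rightarrow> nat \<Rightarrow> _.
  The ereal addition satisfies (+\<infinity>) + (-\<infinity>) = +\<infinity>, as required for the adjoint.\<close>

definition trop_mult :: "(nat \<Rightarrow> nat \<Rightarrow> ereal) \<Rightarrow> nat \<Rightarrow> (nat \<Rightarrow> ereal) \<Rightarrow> nat \<Rightarrow> ereal" where
  "trop_mult C s z = (\<lambda>i. SUP j\<in>{..<s}. C i j + z j)"

definition trop_adj :: "(nat \<Rightarrow> nat \<Rightarrow> ereal) \<Rightarrow> nat \<Rightarrow> (nat \<Rightarrow> ereal) \<Rightarrow> nat \<Rightarrow> ereal" where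
  "trop_adj C r y = (\<lambda>j. INF i\<in>{..<r}. - C i j + y i)"

definition mat_vec :: "(nat \<Rightarrow> nat \<Rightarrow> real) \<Rightarrow> nat \<Rightarrow> (nat \<Rightarrow> real) \<Rightarrow> nat \<Rightarrow> real" where
  "mat_vec P n x = (\<lambda>l. \<Sum>j<n. P l j * x j)"

definition shapley_F ::
  "(nat \<Rightarrow> nat \<Rightarrow> ereal) \<Rightarrow> (nat \<Rightarrow> nat \<Rightarrow> ereal) \<Rightarrow> (nat \<Rightarrow> nat \<Rightarrow> real) \<Rightarrow> nat \<Rightarrow> nat \<Rightarrow> nat
    \<Rightarrow> (nat \<Rightarrow> real) \<Rightarrow> nat \<Rightarrow> ereal" where
  "shapley_F A B P m n q x = trop_adj A m (trop_mult B q (\<lambda>l. ereal (mat_vec P n x l)))"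

definition is_bias :: "((nat \<Rightarrow> real) \<Rightarrow> nat \<Rightarrow> ereal) \<Rightarrow> nat \<Rightarrow> (nat \<Rightarrow> real) \<Rightarrow> real \<Rightarrow> bool" where
  "is_bias F n v c \<longleftrightarrow> (\<forall>j<n. F v j = ereal (c + v j))"

definition row_stochastic :: "(nat \<Rightarrow> nat \<Rightarrow> real) \<Rightarrow> nat \<Rightarrow> nat \<Rightarrow> bool" where
  "row_stochastic P q n \<longleftrightarrow> (\<forall>i<q. (\<forall>l<n. P i l \<ge> 0) \<and> (\<Sum>l<n. P i l) = 1)"

definition nondet_states :: "(nat \<Rightarrow> nat \<Rightarrow> real) \<Rightarrow> nat \<Rightarrow> nat \<Rightarrow> nat set" where
  "nondet_states P q n = {i. i < q \<and> (\<exists>l l'. l < n \<and> l' < n \<and> l \<noteq> l' \<and> P i l > 0 \<and> P i l' > 0)}"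

definition trop_int_entry :: "ereal \<Rightarrow> bool" where
  "trop_int_entry a \<longleftrightarrow> a = -\<infinity> \<or> (\<exists>z::int. a = ereal (of_int z))"

end

theory Submission
  imports Defs
begin

text \<open>Picking an optimal entry of A and of B at each coordinate turns the bias equation into
  lam + v j = r j + (P v) (g j) with integers r j and rows g j of P. This is the Poisson equation
  of a Markov chain: on the coordinates, j moving to t with probability P (g j) t, if g is
  injective; otherwise on the fewer than n rows g ` {..<n}, row l moving to g t with probability
  P l t. On a closed communicating class the Markov chain tree theorem provides an invariant
  measure K x, a sum of products of transition probabilities over the spanning trees rooted at x,
  and averaging the Poisson equation against it gives lam * (\<Sum> K) = \<Sum> K * c with integer
  rewards c. A tree takes one edge out of every state but its root, and only the k nondeterministic
  rows have denominator M; as the first chain has integer mean rewards and the second fewer than n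
  states, e = min k (n - 1) factors M clear all denominators. Since \<Sum> K \<le> n, the nonzero
  integer lam * M ^ e * (\<Sum> K) yields |lam| \<ge> 1 / (n * M ^ e).\<close>

lemma funpow_reaches_cong:
  assumes agree: "\<And>z. z \<noteq> x \<Longrightarrow> G z = F z" and "(F ^^ m) y = x"
  shows "\<exists>k. (G ^^ k) y = x"
  using assms(2)
proof (induction m arbitrary: y)
  case 0
  then show ?case by (metis funpow_0)
next
  case (Suc m)
  show ?case
  proof (cases "y = x")
    case True
    then show ?thesis by (metis funpow_0)
  next
    case False
    have "(F ^^ m) (F y) = x" using Suc.prems by (simp add: funpow_swap1)
    then obtain k where "(G ^^ k) (G y) = x" using Suc.IH agree[OF False] by metis
    then have "(G ^^ Suc k) y = x" by (simp add: funpow_swap1)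
    then show ?thesis ..
  qed
qed

lemma sum_PiE_split:
  assumes "x \<in> X"
  shows "(\<Sum>\<alpha>\<in>PiE X E. f \<alpha>) = (\<Sum>a\<in>E x. \<Sum>\<beta>\<in>PiE (X - {x}) E. f (\<beta>(x := a)))"
proof -
  have X: "X = insert x (X - {x})" using assms by blast
  have "PiE X E = (\<lambda>(a, \<beta>). \<beta>(x := a)) ` (E x \<times> PiE (X - {x}) E)"
    by (subst X) (rule PiE_insert_eq)
  moreover have "inj_on (\<lambda>(a, \<beta>). \<beta>(x := a)) (E x \<times> PiE (X - {x}) E)"
    by (rule inj_combinator) simp
  ultimately have "(\<Sum>\<alpha>\<in>PiE X E. f \<alpha>) = (\<Sum>(a, \<beta>)\<in>E x \<times> PiE (X - {x}) E. f (\<beta>(x := a)))"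
    by (simp add: sum.reindex case_prod_unfold)
  also have "\<dots> = (\<Sum>a\<in>E x. \<Sum>\<beta>\<in>PiE (X - {x}) E. f (\<beta>(x := a)))"
    by (rule sum.cartesian_product[symmetric])
  finally show ?thesis .
qed

lemma card_filter_remove:
  assumes "finite A" and "x \<in> A"
  shows "card {y\<in>A - {x}. p y} + (if p x then 1 else 0) = card {y\<in>A. p y}"
proof (cases "p x")
  case True
  then have "{y\<in>A. p y} = insert x {y\<in>A - {x}. p y}" using assms(2) by auto
  then show ?thesis using True assms(1) by simp
next
  case False
  then have "{y\<in>A. p y} = {y\<in>A - {x}. p y}" by auto
  then show ?thesis using False by simp
qed

lemma inverse_abs_le_of_Ints:
  fixes K c :: "'s \<Rightarrow> real"
  assumes "finite X" and "x0 \<in> X" and "K x0 > 0" and K_01: "\<And>x. x \<in> X \<Longrightarrow> 0 \<le> K x \<and> K x \<le> 1"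
    and balance: "lam * (\<Sum>x\<in>X. K x) = (\<Sum>x\<in>X. K x * c x)"
    and Ints: "\<And>x. x \<in> X \<Longrightarrow> \<mu> * K x * c x \<in> \<int>"
    and "lam \<noteq> 0" and "\<mu> > 0"
  shows "1 / \<bar>lam\<bar> \<le> real (card X) * \<mu>"
proof -
  define N where "N = \<mu> * (\<Sum>x\<in>X. K x)"
  have "(\<Sum>x\<in>X. K x) > 0" using assms by (intro sum_pos2[of X x0 K]) auto
  then have "N > 0" using \<open>\<mu> > 0\<close> by (simp add: N_def)
  have "lam * N = \<mu> * (\<Sum>x\<in>X. K x * c x)"
    unfolding N_def using balance by (metis mult.left_commute)
  also have "\<dots> = (\<Sum>x\<in>X. \<mu> * K x * c x)" by (simp add: sum_distrib_left mult.assoc)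
  also have "\<dots> \<in> \<int>" using Ints by (intro Ints_sum) auto
  finally have "1 \<le> \<bar>lam * N\<bar>" using \<open>lam \<noteq> 0\<close> \<open>N > 0\<close> by (intro Ints_nonzero_abs_ge1) auto
  then have "1 / \<bar>lam\<bar> \<le> N" using \<open>lam \<noteq> 0\<close> \<open>N > 0\<close> by (simp add: abs_mult divide_le_eq mult.commute)
  moreover have "(\<Sum>x\<in>X. K x) \<le> real (card X)"
    using sum_mono[of X K "\<lambda>_. 1"] K_01 by simp
  then have "N \<le> real (card X) * \<mu>" using \<open>\<mu> > 0\<close> by (simp add: N_def mult.commute)
  ultimately show ?thesis by linarith
qed

text \<open>From state x every edge a \<in> E x leads to s x a with probability w x a (parallel edges are
  allowed). A policy \<alpha> \<in> PiE X E keeps one edge out of every state.\<close>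

locale finite_markov_chain =
  fixes X :: "'s set" and E :: "'s \<Rightarrow> 'c set" and w :: "'s \<Rightarrow> 'c \<Rightarrow> real"
    and s :: "'s \<Rightarrow> 'c \<Rightarrow> 's"
  assumes finX: "finite X" and finE: "\<And>x. x \<in> X \<Longrightarrow> finite (E x)"
    and neE: "\<And>x. x \<in> X \<Longrightarrow> E x \<noteq> {}"
    and wsum: "\<And>x. x \<in> X \<Longrightarrow> (\<Sum>a\<in>E x. w x a) = 1"
    and wpos: "\<And>x a. x \<in> X \<Longrightarrow> a \<in> E x \<Longrightarrow> w x a > 0"
    and sX: "\<And>x a. x \<in> X \<Longrightarrow> a \<in> E x \<Longrightarrow> s x a \<in> X"
begin

definition succ :: "('s \<Rightarrow> 'c) \<Rightarrow> 's \<Rightarrow> 's" where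
  "succ \<alpha> z = s z (\<alpha> z)"

definition attracting :: "('s \<Rightarrow> 'c) \<Rightarrow> 's \<Rightarrow> bool" where
  "attracting \<alpha> x \<longleftrightarrow> (\<forall>y\<in>X. \<exists>m. (succ \<alpha> ^^ m) y = x)"

definition weight :: "'s set \<Rightarrow> ('s \<Rightarrow> 'c) \<Rightarrow> real" where
  "weight Y \<alpha> = (\<Prod>y\<in>Y. w y (\<alpha> y))"

text \<open>A partial policy \<beta> on X - {x} towards which x is attracting is a spanning tree directed
  to the root x, so this is the weight of the Markov chain tree theorem. Leaving \<beta> x undefined is
  harmless: whether x is attracting does not depend on the edge chosen at x (attracting_upd).\<close>

definition tree_weight :: "'s \<Rightarrow> real" where
  "tree_weight x =
    (\<Sum>\<beta>\<in>PiE (X - {x}) E. weight (X - {x}) \<beta> * (if attracting \<beta> x then 1 else 0))"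

definition edges :: "('s \<times> 's) set" where
  "edges = {(y, s y a) | y a. y \<in> X \<and> a \<in> E y}"

lemma attracting_upd: "attracting (\<alpha>(x := b)) x \<longleftrightarrow> attracting \<alpha> x"
proof -
  have "succ (\<alpha>(x := b)) z = succ \<alpha> z" if "z \<noteq> x" for z
    using that by (simp add: succ_def)
  then show ?thesis
    unfolding attracting_def by (metis funpow_reaches_cong)
qed

lemma succ_in: "\<alpha> \<in> PiE X E \<Longrightarrow> y \<in> X \<Longrightarrow> succ \<alpha> y \<in> X"
  by (auto simp: succ_def intro: sX)

lemma funpow_succ_in: "\<alpha> \<in> PiE X E \<Longrightarrow> y \<in> X \<Longrightarrow> (succ \<alpha> ^^ m) y \<in> X"
  by (induction m) (auto intro: succ_in)

lemma succ_image_attracting: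
  assumes \<alpha>: "\<alpha> \<in> PiE X E"
  shows "succ \<alpha> ` {x\<in>X. attracting \<alpha> x} = {x\<in>X. attracting \<alpha> x}"
proof (intro equalityI subsetI)
  fix z assume "z \<in> succ \<alpha> ` {x\<in>X. attracting \<alpha> x}"
  then obtain x where x: "x \<in> X" "attracting \<alpha> x" and z: "z = succ \<alpha> x" by blast
  have "\<exists>m. (succ \<alpha> ^^ m) y = z" if "y \<in> X" for y
  proof -
    obtain m where "(succ \<alpha> ^^ m) y = x" using x(2) \<open>y \<in> X\<close> unfolding attracting_def by blast
    then have "(succ \<alpha> ^^ Suc m) y = z" using z by simp
    then show ?thesis ..
  qed
  then show "z \<in> {x\<in>X. attracting \<alpha> x}" using succ_in[OF \<alpha> x(1)] z by (simp add: attracting_def)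
next
  fix z assume z: "z \<in> {x\<in>X. attracting \<alpha> x}"
  then obtain m where m: "(succ \<alpha> ^^ m) (succ \<alpha> z) = z"
    using succ_in[OF \<alpha>] unfolding attracting_def by blast
  define x where "x = (succ \<alpha> ^^ m) z"
  have "\<exists>k. (succ \<alpha> ^^ k) y = x" if "y \<in> X" for y
  proof -
    obtain k where "(succ \<alpha> ^^ k) y = z" using z \<open>y \<in> X\<close> unfolding attracting_def by blast
    then have "(succ \<alpha> ^^ (m + k)) y = x" by (simp add: x_def funpow_add)
    then show ?thesis ..
  qed
  moreover have "succ \<alpha> x = z" using m by (simp add: x_def funpow_swap1)
  moreover have "x \<in> X" using z funpow_succ_in[OF \<alpha>] by (simp add: x_def)
  ultimately show "z \<in> succ \<alpha> ` {x\<in>X. attracting \<alpha> x}" by (auto simp: attracting_def)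
qed

lemma sum_attracting_telescope:
  fixes u :: "'s \<Rightarrow> real"
  assumes "\<alpha> \<in> PiE X E"
  shows "(\<Sum>x\<in>{x\<in>X. attracting \<alpha> x}. u (succ \<alpha> x) - u x) = 0"
proof -
  let ?Z = "{x\<in>X. attracting \<alpha> x}"
  have img: "succ \<alpha> ` ?Z = ?Z" by (rule succ_image_attracting[OF assms])
  then have "inj_on (succ \<alpha>) ?Z" using finX by (simp add: eq_card_imp_inj_on)
  then have "(\<Sum>x\<in>?Z. u (succ \<alpha> x)) = (\<Sum>x\<in>succ \<alpha> ` ?Z. u x)" by (simp add: sum.reindex)
  then show ?thesis by (simp add: img sum_subtractf)
qed

lemma weight_upd:
  assumes "x \<in> X"
  shows "weight X (\<beta>(x := a)) = w x a * weight (X - {x}) \<beta>"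
proof -
  have "weight X (\<beta>(x := a)) = w x ((\<beta>(x := a)) x) * (\<Prod>y\<in>X - {x}. w y ((\<beta>(x := a)) y))"
    unfolding weight_def by (rule prod.remove[OF finX assms])
  then have "weight X (\<beta>(x := a)) = w x a * (\<Prod>y\<in>X - {x}. w y ((\<beta>(x := a)) y))"
    by simp
  also have "(\<Prod>y\<in>X - {x}. w y ((\<beta>(x := a)) y)) = weight (X - {x}) \<beta>"
    unfolding weight_def by (rule prod.cong) auto
  finally show ?thesis .
qed

lemma sum_policies_attracting:
  assumes "x \<in> X"
  shows "(\<Sum>\<alpha>\<in>PiE X E. weight X \<alpha> * (if attracting \<alpha> x then \<phi> (\<alpha> x) else 0))
     = tree_weight x * (\<Sum>a\<in>E x. w x a * \<phi> a)"
proof -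
  have "(\<Sum>\<alpha>\<in>PiE X E. weight X \<alpha> * (if attracting \<alpha> x then \<phi> (\<alpha> x) else 0))
     = (\<Sum>a\<in>E x. \<Sum>\<beta>\<in>PiE (X - {x}) E.
          (w x a * \<phi> a) * (weight (X - {x}) \<beta> * (if attracting \<beta> x then 1 else 0)))"
    unfolding sum_PiE_split[OF assms]
    by (intro sum.cong refl) (simp add: weight_upd[OF assms] attracting_upd)
  also have "\<dots> = (\<Sum>a\<in>E x. (w x a * \<phi> a) * tree_weight x)"
    by (simp add: tree_weight_def sum_distrib_left)
  also have "\<dots> = tree_weight x * (\<Sum>a\<in>E x. w x a * \<phi> a)"
    by (simp add: sum_distrib_left mult.commute)
  finally show ?thesis .
qed

lemma sum_attracting_swap:
  "(\<Sum>x\<in>X. \<Sum>\<alpha>\<in>PiE X E. weight X \<alpha> * (if attracting \<alpha> x then f x (\<alpha> x) else 0))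
   = (\<Sum>\<alpha>\<in>PiE X E. weight X \<alpha> * (\<Sum>x\<in>{x\<in>X. attracting \<alpha> x}. f x (\<alpha> x)))"
  by (subst sum.swap)
    (simp add: sum_distrib_left sum.inter_filter[OF finX] if_distrib)

text \<open>Averaging the Poisson equation against the tree weights: after expanding them into sums
  over policies, the potential u only enters through telescoping sums along cycles.\<close>

lemma tree_weight_poisson:
  fixes \<rho> :: "'s \<Rightarrow> 'c \<Rightarrow> real" and u :: "'s \<Rightarrow> real"
  assumes poisson: "\<And>x. x \<in> X \<Longrightarrow> (\<Sum>a\<in>E x. w x a * (\<rho> x a - lam + u (s x a) - u x)) = 0"
  shows "(\<Sum>x\<in>X. tree_weight x * (\<Sum>a\<in>E x. w x a * (\<rho> x a - lam))) = 0"
proof -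
  let ?Z = "\<lambda>\<alpha>. {x\<in>X. attracting \<alpha> x}"
  have "(\<Sum>x\<in>X. tree_weight x * (\<Sum>a\<in>E x. w x a * (\<rho> x a - lam)))
     = (\<Sum>x\<in>X. \<Sum>\<alpha>\<in>PiE X E. weight X \<alpha> * (if attracting \<alpha> x then \<rho> x (\<alpha> x) - lam else 0))"
    by (intro sum.cong refl) (rule sum_policies_attracting[symmetric])
  also have "\<dots> = (\<Sum>\<alpha>\<in>PiE X E. weight X \<alpha> * (\<Sum>x\<in>?Z \<alpha>. \<rho> x (\<alpha> x) - lam))"
    by (rule sum_attracting_swap)
  also have "\<dots> = (\<Sum>\<alpha>\<in>PiE X E. weight X \<alpha> *
      (\<Sum>x\<in>?Z \<alpha>. \<rho> x (\<alpha> x) - lam + u (s x (\<alpha> x)) - u x))"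
  proof (rule sum.cong[OF refl])
    fix \<alpha> assume "\<alpha> \<in> PiE X E"
    then have "(\<Sum>x\<in>?Z \<alpha>. u (s x (\<alpha> x)) - u x) = 0"
      using sum_attracting_telescope by (simp add: succ_def)
    moreover have "(\<Sum>x\<in>?Z \<alpha>. \<rho> x (\<alpha> x) - lam + u (s x (\<alpha> x)) - u x)
        = (\<Sum>x\<in>?Z \<alpha>. \<rho> x (\<alpha> x) - lam) + (\<Sum>x\<in>?Z \<alpha>. u (s x (\<alpha> x)) - u x)"
      by (simp add: sum.distrib[symmetric] algebra_simps)
    ultimately show "weight X \<alpha> * (\<Sum>x\<in>?Z \<alpha>. \<rho> x (\<alpha> x) - lam)
        = weight X \<alpha> * (\<Sum>x\<in>?Z \<alpha>. \<rho> x (\<alpha> x) - lam + u (s x (\<alpha> x)) - u x)"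
      by simp
  qed
  also have "\<dots> = (\<Sum>x\<in>X. \<Sum>\<alpha>\<in>PiE X E. weight X \<alpha> *
      (if attracting \<alpha> x then \<rho> x (\<alpha> x) - lam + u (s x (\<alpha> x)) - u x else 0))"
    by (rule sum_attracting_swap[symmetric])
  also have "\<dots> = (\<Sum>x\<in>X. tree_weight x * (\<Sum>a\<in>E x. w x a * (\<rho> x a - lam + u (s x a) - u x)))"
    by (intro sum.cong refl) (rule sum_policies_attracting)
  also have "\<dots> = 0" using poisson by simp
  finally show ?thesis .
qed

lemma weight_nonneg: "\<beta> \<in> PiE Y E \<Longrightarrow> Y \<subseteq> X \<Longrightarrow> weight Y \<beta> \<ge> 0"
  unfolding weight_def by (rule prod_nonneg) (auto intro: less_imp_le wpos)

lemma weight_pos: "\<beta> \<in> PiE Y E \<Longrightarrow> Y \<subseteq> X \<Longrightarrow> weight Y \<beta> > 0"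
  unfolding weight_def by (rule prod_pos) (auto intro: wpos)

lemma tree_weight_nonneg: "tree_weight x \<ge> 0"
  unfolding tree_weight_def by (rule sum_nonneg) (auto intro: weight_nonneg)

lemma tree_weight_le_1: "tree_weight x \<le> 1"
proof -
  have "tree_weight x \<le> (\<Sum>\<beta>\<in>PiE (X - {x}) E. weight (X - {x}) \<beta>)"
    unfolding tree_weight_def by (rule sum_mono) (auto intro: weight_nonneg)
  also have "\<dots> = (\<Prod>y\<in>X - {x}. \<Sum>a\<in>E y. w y a)"
    unfolding weight_def by (rule prod_sum_PiE[symmetric]) (use finX finE in auto)
  also have "\<dots> = 1" by (rule prod.neutral) (auto simp: wsum)
  finally show ?thesis .
qed

lemma tree_weight_Ints:
  fixes N :: real
  assumes "\<And>y a. y \<in> X \<Longrightarrow> a \<in> E y \<Longrightarrow> (if p y then N else 1) * w y a \<in> \<int>"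
  shows "N ^ card {y\<in>X - {x}. p y} * tree_weight x \<in> \<int>"
proof -
  have "(\<Prod>y\<in>X - {x}. if p y then N else 1) = N ^ card {y\<in>X - {x}. p y}"
    using finX by (simp add: prod.inter_filter[symmetric])
  then have "N ^ card {y\<in>X - {x}. p y} * tree_weight x
    = (\<Sum>\<beta>\<in>PiE (X - {x}) E. (\<Prod>y\<in>X - {x}. (if p y then N else 1) * w y (\<beta> y))
        * (if attracting \<beta> x then 1 else 0))"
    by (simp add: tree_weight_def weight_def sum_distrib_left prod.distrib mult.assoc)
  also have "\<dots> \<in> \<int>"
  proof (rule Ints_sum)
    fix \<beta> assume "\<beta> \<in> PiE (X - {x}) E"
    then have "(\<Prod>y\<in>X - {x}. (if p y then N else 1) * w y (\<beta> y)) \<in> \<int>"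
      using assms by (intro Ints_prod) (auto simp: PiE_iff)
    then show "(\<Prod>y\<in>X - {x}. (if p y then N else 1) * w y (\<beta> y))
        * (if attracting \<beta> x then 1 else 0) \<in> \<int>" by simp
  qed
  finally show ?thesis .
qed

text \<open>Descending along distances to x0 in the edge graph gives a policy leading every state to x0.\<close>

lemma exists_policy_attracting:
  assumes x0: "x0 \<in> X" and irreducible: "\<forall>y\<in>X. (y, x0) \<in> edges\<^sup>*"
  obtains \<alpha> where "\<alpha> \<in> PiE X E" and "attracting \<alpha> x0"
proof -
  define depth where "depth y = (LEAST k. (y, x0) \<in> edges ^^ k)" for y
  have descent: "\<exists>a\<in>E y. y \<noteq> x0 \<longrightarrow> depth (s y a) < depth y" if y: "y \<in> X" for y
  proof (cases "y = x0")
    case True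
    then show ?thesis using neE[OF y] by blast
  next
    case False
    obtain k where "(y, x0) \<in> edges ^^ k"
      using irreducible y by (meson rtrancl_imp_relpow)
    then have path: "(y, x0) \<in> edges ^^ depth y" unfolding depth_def by (rule LeastI)
    with False obtain k where k: "depth y = Suc k" by (cases "depth y") auto
    from relpow_Suc_D2[OF path[unfolded k]] obtain z
      where z: "(y, z) \<in> edges" "(z, x0) \<in> edges ^^ k" by blast
    from z(1) obtain a where a: "a \<in> E y" "z = s y a" unfolding edges_def by auto
    have "depth z \<le> k" unfolding depth_def by (rule Least_le) (rule z(2))
    then show ?thesis using a k by (intro bexI[of _ a]) auto
  qed
  obtain f where f: "\<And>y. y \<in> X \<Longrightarrow> f y \<in> E y \<and> (y \<noteq> x0 \<longrightarrow> depth (s y (f y)) < depth y)"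
    using bchoice[of X "\<lambda>y a. a \<in> E y \<and> (y \<noteq> x0 \<longrightarrow> depth (s y a) < depth y)"] descent by blast
  define \<alpha> where "\<alpha> = restrict f X"
  have \<alpha>: "\<alpha> \<in> PiE X E" using f by (simp add: \<alpha>_def)
  have "\<exists>m. (succ \<alpha> ^^ m) y = x0" if "y \<in> X" for y
    using that
  proof (induction y rule: measure_induct_rule[of depth])
    case (less y)
    show ?case
    proof (cases "y = x0")
      case True
      then show ?thesis by (metis funpow_0)
    next
      case False
      have "succ \<alpha> y \<in> X" and "depth (succ \<alpha> y) < depth y"
        using succ_in[OF \<alpha> less.prems] f[OF less.prems] False less.prems
        by (auto simp: succ_def \<alpha>_def)
      then obtain m where "(succ \<alpha> ^^ m) (succ \<alpha> y) = x0" using less.IH by blast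
      then have "(succ \<alpha> ^^ Suc m) y = x0" by (simp add: funpow_swap1)
      then show ?thesis ..
    qed
  qed
  then show ?thesis using that \<alpha> by (simp add: attracting_def)
qed

lemma tree_weight_pos:
  assumes "x0 \<in> X" and "\<forall>y\<in>X. (y, x0) \<in> edges\<^sup>*"
  shows "tree_weight x0 > 0"
proof -
  obtain \<alpha> where \<alpha>: "\<alpha> \<in> PiE X E" and "attracting \<alpha> x0"
    using exists_policy_attracting[OF assms] .
  define \<beta> where "\<beta> = \<alpha>(x0 := undefined)"
  have \<beta>: "\<beta> \<in> PiE (X - {x0}) E" using \<alpha> by (auto simp: \<beta>_def PiE_iff)
  have "attracting \<beta> x0" using \<open>attracting \<alpha> x0\<close> by (simp add: \<beta>_def attracting_upd)
  then have "weight (X - {x0}) \<beta> * (if attracting \<beta> x0 then 1 else 0) > 0"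
    using weight_pos[OF \<beta>] by simp
  moreover have "finite (PiE (X - {x0}) E)" using finX finE by (intro finite_PiE) auto
  ultimately show ?thesis unfolding tree_weight_def
    by (intro sum_pos2[OF _ \<beta>]) (auto intro: weight_nonneg)
qed

text \<open>A nonempty closed set of states of minimal cardinality is a communicating class.\<close>

lemma exists_closed_class:
  assumes "X \<noteq> {}"
  obtains Y x0 where "Y \<subseteq> X" and "x0 \<in> Y" and "finite_markov_chain Y E w s"
    and "\<forall>y\<in>Y. (y, x0) \<in> (finite_markov_chain.edges Y E s)\<^sup>*"
proof -
  define closed where "closed Y \<longleftrightarrow> Y \<subseteq> X \<and> Y \<noteq> {} \<and> (\<forall>y\<in>Y. \<forall>a\<in>E y. s y a \<in> Y)" for Y
  have "closed X" using assms sX by (auto simp: closed_def)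
  then obtain Y where Y: "closed Y" and minimal: "\<And>Z. closed Z \<Longrightarrow> card Y \<le> card Z"
    using ex_has_least_nat[of closed X card] by blast
  then have "finite Y" using finX by (auto simp: closed_def intro: finite_subset)
  have chain: "finite_markov_chain Y E w s"
    using Y \<open>finite Y\<close> by unfold_locales (auto simp: closed_def finE neE wsum wpos)
  interpret Y: finite_markov_chain Y E w s by (rule chain)
  obtain x0 where "x0 \<in> Y" using Y by (auto simp: closed_def)
  have irreducible: "(y, x0) \<in> Y.edges\<^sup>*" if y: "y \<in> Y" for y
  proof -
    define R where "R = {z. (y, z) \<in> Y.edges\<^sup>*}"
    have "R \<subseteq> Y"
    proof
      fix z assume "z \<in> R"
      then have "(y, z) \<in> Y.edges\<^sup>*" by (simp add: R_def)
      then show "z \<in> Y" by induction (use y Y.sX in \<open>auto simp: Y.edges_def\<close>)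
    qed
    moreover have "s z a \<in> R" if "z \<in> R" "a \<in> E z" for z a
    proof -
      have "(z, s z a) \<in> Y.edges" using that \<open>R \<subseteq> Y\<close> by (auto simp: Y.edges_def)
      then show ?thesis using that(1) by (simp add: R_def rtrancl_into_rtrancl)
    qed
    moreover have "y \<in> R" by (simp add: R_def)
    ultimately have "closed R" using Y by (auto simp: closed_def)
    then have "R = Y" using minimal \<open>R \<subseteq> Y\<close> \<open>finite Y\<close> by (meson card_seteq)
    then show ?thesis using \<open>x0 \<in> Y\<close> unfolding R_def by blast
  qed
  show ?thesis
    by (rule that[of Y x0]) (use Y chain \<open>x0 \<in> Y\<close> irreducible in \<open>auto simp: closed_def\<close>)
qed

text \<open>States with p need the denominator N in their transition probabilities, states with p' in
  their mean reward. The two are tracked separately because on the chain of coordinates the mean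
  reward is an integer everywhere, which saves one factor N.\<close>

lemma inverse_gain_le:
  fixes \<rho> :: "'s \<Rightarrow> 'c \<Rightarrow> real" and u :: "'s \<Rightarrow> real" and N :: nat
  assumes "X \<noteq> {}" and "lam \<noteq> 0" and "N > 0"
    and poisson: "\<And>x. x \<in> X \<Longrightarrow> (\<Sum>a\<in>E x. w x a * (\<rho> x a - lam + u (s x a) - u x)) = 0"
    and w_Ints: "\<And>x a. x \<in> X \<Longrightarrow> a \<in> E x \<Longrightarrow> (if p x then real N else 1) * w x a \<in> \<int>"
    and reward_Ints: "\<And>x. x \<in> X \<Longrightarrow> (if p' x then real N else 1) * (\<Sum>a\<in>E x. w x a * \<rho> x a) \<in> \<int>"
    and exponent: "\<And>x. x \<in> X \<Longrightarrow> card {y\<in>X - {x}. p y} + (if p' x then 1 else 0) \<le> e"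
  shows "1 / \<bar>lam\<bar> \<le> real (card X) * real N ^ e"
proof -
  obtain Y x0 where Y: "Y \<subseteq> X" "x0 \<in> Y" and chain: "finite_markov_chain Y E w s"
    and irreducible: "\<forall>y\<in>Y. (y, x0) \<in> (finite_markov_chain.edges Y E s)\<^sup>*"
    using exists_closed_class[OF \<open>X \<noteq> {}\<close>] .
  interpret Y: finite_markov_chain Y E w s by (rule chain)
  define c where "c x = (\<Sum>a\<in>E x. w x a * \<rho> x a)" for x
  have "(\<Sum>a\<in>E x. w x a * (\<rho> x a - lam)) = c x - lam" if "x \<in> Y" for x
    using Y.wsum[OF that]
    by (simp add: c_def right_diff_distrib sum_subtractf sum_distrib_right[symmetric])
  moreover have "(\<Sum>x\<in>Y. Y.tree_weight x * (\<Sum>a\<in>E x. w x a * (\<rho> x a - lam))) = 0"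
    using poisson Y(1) by (intro Y.tree_weight_poisson[where u = u]) auto
  ultimately have "(\<Sum>x\<in>Y. Y.tree_weight x * (c x - lam)) = 0" by simp
  then have balance: "lam * (\<Sum>x\<in>Y. Y.tree_weight x) = (\<Sum>x\<in>Y. Y.tree_weight x * c x)"
    by (simp add: algebra_simps sum_subtractf sum_distrib_left)
  have "real N ^ e * Y.tree_weight x * c x \<in> \<int>" if x: "x \<in> Y" for x
  proof -
    define k where "k = card {y\<in>Y - {x}. p y}"
    define d where "d = (if p' x then 1 else 0 :: nat)"
    have "k \<le> card {y\<in>X - {x}. p y}"
      unfolding k_def using Y(1) finX by (intro card_mono) auto
    then have "k + d \<le> e" using exponent[of x] x Y(1) by (auto simp: d_def)
    then have "real N ^ e * Y.tree_weight x * c x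
        = real N ^ (e - (k + d)) * (real N ^ k * Y.tree_weight x) * (real N ^ d * c x)"
      by (simp add: power_add[symmetric] algebra_simps)
    moreover have "real N ^ k * Y.tree_weight x \<in> \<int>"
      unfolding k_def by (intro Y.tree_weight_Ints w_Ints) (use Y(1) in auto)
    moreover have "real N ^ d * c x \<in> \<int>"
      using reward_Ints[of x] x Y(1) by (auto simp: d_def c_def)
    ultimately show ?thesis by (metis Ints_mult Ints_power Ints_of_nat)
  qed
  then have "1 / \<bar>lam\<bar> \<le> real (card Y) * real N ^ e"
    using Y.tree_weight_nonneg Y.tree_weight_le_1 \<open>lam \<noteq> 0\<close> \<open>N > 0\<close>
    by (intro inverse_abs_le_of_Ints[OF Y.finX Y(2) Y.tree_weight_pos[OF Y(2) irreducible] _ balance])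
      auto
  also have "\<dots> \<le> real (card X) * real N ^ e"
    using card_mono[OF finX Y(1)] by (simp add: mult_right_mono)
  finally show ?thesis .
qed

end

definition support :: "(nat \<Rightarrow> nat \<Rightarrow> real) \<Rightarrow> nat \<Rightarrow> nat \<Rightarrow> nat set" where
  "support P n l = {t. t < n \<and> 0 < P l t}"

locale rational_policy =
  fixes P :: "nat \<Rightarrow> nat \<Rightarrow> real" and Q :: "nat \<Rightarrow> nat \<Rightarrow> int" and M q n :: nat
    and g :: "nat \<Rightarrow> nat" and r :: "nat \<Rightarrow> int" and v :: "nat \<Rightarrow> real" and lam :: real
  assumes stochastic: "row_stochastic P q n" and M_pos: "M > 0"
    and P_Q: "\<And>l t. l < q \<Longrightarrow> t < n \<Longrightarrow> P l t = real_of_int (Q l t) / real M"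
    and g_range: "\<And>j. j < n \<Longrightarrow> g j < q"
    and policy_eq: "\<And>j. j < n \<Longrightarrow> lam + v j = real_of_int (r j) + mat_vec P n v (g j)"
begin

lemma finite_nondet_states: "finite (nondet_states P q n)"
  by (rule finite_subset[of _ "{..<q}"]) (auto simp: nondet_states_def)

lemma P_nonneg: "l < q \<Longrightarrow> t < n \<Longrightarrow> 0 \<le> P l t"
  using stochastic by (simp add: row_stochastic_def)

lemma sum_row: "l < q \<Longrightarrow> (\<Sum>t<n. P l t) = 1"
  using stochastic by (simp add: row_stochastic_def)

lemma sum_support:
  assumes "l < q"
  shows "(\<Sum>t\<in>support P n l. P l t * f t) = (\<Sum>t<n. P l t * f t)"
proof (rule sum.mono_neutral_left)
  show "\<forall>t\<in>{..<n} - support P n l. P l t * f t = 0"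
    using P_nonneg[OF assms] by (force simp: support_def)
qed (auto simp: support_def)

lemma sum_support_eq_1: "l < q \<Longrightarrow> (\<Sum>t\<in>support P n l. P l t) = 1"
  using sum_support[of l "\<lambda>_. 1"] sum_row by simp

text \<open>A deterministic row has a single entry 1, so only nondeterministic rows need the factor M.\<close>

lemma scaled_entry_Ints:
  assumes l: "l < q" and t: "t < n"
  shows "(if l \<in> nondet_states P q n then real M else 1) * P l t \<in> \<int>"
proof (cases "l \<in> nondet_states P q n")
  case True
  then show ?thesis using P_Q[OF l t] M_pos by simp
next
  case deterministic: False
  consider "P l t = 0" | "P l t > 0" using P_nonneg[OF l t] by linarith
  then show ?thesis
  proof cases
    case positive: 2
    have "P l t' = 0" if "t' \<in> {..<n} - {t}" for t'
      using deterministic positive P_nonneg[OF l, of t'] that l t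
      by (force simp: nondet_states_def)
    then have "(\<Sum>t'<n. P l t') = P l t"
      using t by (simp add: sum.remove[of "{..<n}" t])
    then show ?thesis using sum_row[OF l] deterministic by simp
  qed simp
qed

lemma scaled_mean_reward_Ints:
  fixes z :: "nat \<Rightarrow> int"
  assumes l: "l < q"
  shows "(if l \<in> nondet_states P q n then real M else 1) * (\<Sum>t\<in>support P n l. P l t * of_int (z t)) \<in> \<int>"
proof -
  have "(if l \<in> nondet_states P q n then real M else 1) * (\<Sum>t\<in>support P n l. P l t * of_int (z t))
      = (\<Sum>t\<in>support P n l. ((if l \<in> nondet_states P q n then real M else 1) * P l t) * of_int (z t))"
    by (simp add: sum_distrib_left mult.assoc)
  also have "\<dots> \<in> \<int>"
    by (intro Ints_sum, rule Ints_mult[OF scaled_entry_Ints[OF l]]) (auto simp: support_def)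
  finally show ?thesis .
qed

lemma support_chain:
  assumes "finite S" and "\<And>x. x \<in> S \<Longrightarrow> h x < q" and "\<And>t. t < n \<Longrightarrow> k t \<in> S"
  shows "finite_markov_chain S (\<lambda>x. support P n (h x)) (\<lambda>x. P (h x)) (\<lambda>x. k)"
proof
  fix x assume "x \<in> S"
  then show "support P n (h x) \<noteq> {}" using sum_support_eq_1 assms(2) by fastforce
  show "(\<Sum>t\<in>support P n (h x). P (h x) t) = 1" using sum_support_eq_1 assms(2) \<open>x \<in> S\<close> by blast
qed (use assms in \<open>auto simp: support_def\<close>)

lemma poisson_coordinates:
  assumes j: "j < n"
  shows "(\<Sum>t\<in>support P n (g j). P (g j) t * (of_int (r j) - lam + v t - v j)) = 0"
proof -
  have "(\<Sum>t\<in>support P n (g j). P (g j) t * (of_int (r j) - lam + v t - v j))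
      = (\<Sum>t<n. (of_int (r j) - lam - v j) * P (g j) t + P (g j) t * v t)"
    unfolding sum_support[OF g_range[OF j]] by (intro sum.cong refl) (simp add: algebra_simps)
  also have "\<dots> = (of_int (r j) - lam - v j) * (\<Sum>t<n. P (g j) t) + mat_vec P n v (g j)"
    by (simp add: mat_vec_def sum.distrib sum_distrib_left)
  also have "\<dots> = 0" using sum_row[OF g_range[OF j]] policy_eq[OF j] by simp
  finally show ?thesis .
qed

lemma poisson_rows:
  assumes l: "l < q"
  shows "(\<Sum>t\<in>support P n l. P l t *
      (of_int (r t) - lam + mat_vec P n v (g t) - mat_vec P n v l)) = 0"
proof -
  let ?pv = "mat_vec P n v"
  have "(\<Sum>t\<in>support P n l. P l t * (of_int (r t) - lam + ?pv (g t) - ?pv l))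
      = (\<Sum>t<n. P l t * (v t - ?pv l))"
    unfolding sum_support[OF l]
  proof (rule sum.cong[OF refl])
    fix t assume "t \<in> {..<n}"
    then have "of_int (r t) - lam + ?pv (g t) = v t" using policy_eq[of t] by simp
    then show "P l t * (of_int (r t) - lam + ?pv (g t) - ?pv l) = P l t * (v t - ?pv l)" by simp
  qed
  also have "\<dots> = ?pv l - ?pv l * (\<Sum>t<n. P l t)"
    by (simp add: right_diff_distrib sum_subtractf sum_distrib_left mult.commute)
      (simp add: mat_vec_def mult.commute)
  also have "\<dots> = 0" using sum_row[OF l] by simp
  finally show ?thesis .
qed

lemma inverse_gain_le_inj:
  assumes inj: "inj_on g {..<n}" and "n > 0" and "lam \<noteq> 0"
  shows "1 / \<bar>lam\<bar> \<le> real n * real M ^ min (card (nondet_states P q n)) (n - 1)"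
proof -
  let ?ND = "nondet_states P q n"
  interpret C: finite_markov_chain "{..<n}" "\<lambda>j. support P n (g j)" "\<lambda>j. P (g j)" "\<lambda>j t. t"
    by (rule support_chain) (auto intro: g_range)
  have "1 / \<bar>lam\<bar> \<le> real (card {..<n}) * real M ^ min (card ?ND) (n - 1)"
  proof (rule C.inverse_gain_le[where \<rho> = "\<lambda>j t. of_int (r j)" and u = v
        and p = "\<lambda>j. g j \<in> ?ND" and p' = "\<lambda>_. False"])
    show "{..<n} \<noteq> {}" and "lam \<noteq> 0" and "M > 0" using assms M_pos by auto
  next
    fix j assume "j \<in> {..<n}"
    then show "(\<Sum>t\<in>support P n (g j). P (g j) t * (of_int (r j) - lam + v t - v j)) = 0"
      by (simp add: poisson_coordinates)
  next
    fix j assume "j \<in> {..<n}"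
    then show "(if False then real M else 1) * (\<Sum>t\<in>support P n (g j). P (g j) t * of_int (r j)) \<in> \<int>"
      using sum_support_eq_1[OF g_range] by (simp add: sum_distrib_right[symmetric])
  next
    fix j t assume "j \<in> {..<n}" and "t \<in> support P n (g j)"
    then show "(if g j \<in> ?ND then real M else 1) * P (g j) t \<in> \<int>"
      using scaled_entry_Ints g_range by (auto simp: support_def)
  next
    fix j assume "j \<in> {..<n}"
    let ?Y = "{y\<in>{..<n} - {j}. g y \<in> ?ND}"
    have "card ?Y \<le> card ({..<n} - {j})" by (intro card_mono) auto
    moreover have "card ?Y = card (g ` ?Y)" by (intro card_image[symmetric] inj_on_subset[OF inj]) auto
    moreover have "card (g ` ?Y) \<le> card ?ND" using finite_nondet_states by (intro card_mono) auto
    ultimately show "card ?Y + (if False then 1 else 0) \<le> min (card ?ND) (n - 1)"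
      using \<open>j \<in> {..<n}\<close> by simp
  qed
  then show ?thesis by simp
qed

lemma inverse_gain_le_not_inj:
  assumes not_inj: "\<not> inj_on g {..<n}" and "n > 0" and "lam \<noteq> 0"
  shows "1 / \<bar>lam\<bar> \<le> real n * real M ^ min (card (nondet_states P q n)) (n - 1)"
proof -
  let ?ND = "nondet_states P q n"
  define T where "T = g ` {..<n}"
  have "card T \<le> n" using card_image_le[of "{..<n}" g] by (simp add: T_def)
  moreover have "card T \<noteq> n" using not_inj inj_on_iff_eq_card[of "{..<n}" g] by (simp add: T_def)
  ultimately have card_T: "card T \<le> n - 1" by simp
  have T_rows: "\<And>l. l \<in> T \<Longrightarrow> l < q" using g_range by (auto simp: T_def)
  interpret C: finite_markov_chain T "support P n" P "\<lambda>l. g"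
    using support_chain[of T "\<lambda>l. l" g] T_rows by (simp add: T_def)
  have "1 / \<bar>lam\<bar> \<le> real (card T) * real M ^ min (card ?ND) (n - 1)"
  proof (rule C.inverse_gain_le[where \<rho> = "\<lambda>l t. of_int (r t)" and u = "mat_vec P n v"
        and p = "\<lambda>l. l \<in> ?ND" and p' = "\<lambda>l. l \<in> ?ND"])
    show "T \<noteq> {}" and "lam \<noteq> 0" and "M > 0" using assms M_pos by (auto simp: T_def)
  next
    fix l assume "l \<in> T"
    then show "(\<Sum>t\<in>support P n l. P l t *
        (of_int (r t) - lam + mat_vec P n v (g t) - mat_vec P n v l)) = 0"
      by (simp add: poisson_rows T_rows)
  next
    fix l assume "l \<in> T"
    then show "(if l \<in> ?ND then real M else 1) * (\<Sum>t\<in>support P n l. P l t * of_int (r t)) \<in> \<int>"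
      by (simp add: scaled_mean_reward_Ints T_rows)
  next
    fix l t assume "l \<in> T" and "t \<in> support P n l"
    then show "(if l \<in> ?ND then real M else 1) * P l t \<in> \<int>"
      using scaled_entry_Ints T_rows by (auto simp: support_def)
  next
    fix l assume "l \<in> T"
    have "card {y\<in>T - {l}. y \<in> ?ND} + (if l \<in> ?ND then 1 else 0) = card (T \<inter> ?ND)"
      using card_filter_remove[of T l "\<lambda>y. y \<in> ?ND"] \<open>l \<in> T\<close> by (simp add: T_def Int_def)
    moreover have "card (T \<inter> ?ND) \<le> card ?ND" and "card (T \<inter> ?ND) \<le> card T"
      using finite_nondet_states by (auto intro: card_mono simp: T_def)
    ultimately show "card {y\<in>T - {l}. y \<in> ?ND} + (if l \<in> ?ND then 1 else 0) \<le> min (card ?ND) (n - 1)"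
      using card_T by simp
  qed
  also have "\<dots> \<le> real n * real M ^ min (card ?ND) (n - 1)"
    using card_T \<open>n > 0\<close> by (intro mult_right_mono) auto
  finally show ?thesis .
qed

end

text \<open>A finite value of A^\<sharp>(B \<odot> y) is attained at some entry -A i j + B i l + y l, and both
  entries are then finite, hence integers.\<close>

lemma trop_adj_mult_value:
  fixes A B :: "nat \<Rightarrow> nat \<Rightarrow> ereal" and y :: "nat \<Rightarrow> real"
  assumes A_int: "\<forall>i<m. \<forall>j<n. trop_int_entry (A i j)"
    and B_int: "\<forall>i<m. \<forall>l<q. trop_int_entry (B i l)"
    and A_col: "\<forall>j<n. \<exists>i<m. A i j \<noteq> -\<infinity>"
    and B_row: "\<forall>i<m. \<exists>l<q. B i l \<noteq> -\<infinity>"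
    and j: "j < n"
    and finite_value: "trop_adj A m (trop_mult B q (\<lambda>l. ereal (y l))) j = ereal c"
  shows "\<exists>l<q. \<exists>r::int. c = real_of_int r + y l"
proof -
  define Y where "Y = trop_mult B q (\<lambda>l. ereal (y l))"
  have "{..<m} \<noteq> {}" using A_col j by auto
  then have "(INF i\<in>{..<m}. - A i j + Y i) \<in> (\<lambda>i. - A i j + Y i) ` {..<m}"
    by (intro finite_Inf_in) (auto simp: inf_min min_def)
  then obtain i where i: "i < m" and Ai: "- A i j + Y i = ereal c"
    using finite_value by (auto simp: trop_adj_def Y_def)
  obtain l0 where l0: "l0 < q" "B i l0 \<noteq> -\<infinity>" using B_row i by blast
  then have "(SUP l\<in>{..<q}. B i l + ereal (y l)) \<in> (\<lambda>l. B i l + ereal (y l)) ` {..<q}"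
    by (intro finite_Sup_in) (auto simp: sup_max max_def)
  then obtain l where l: "l < q" and Yi: "Y i = B i l + ereal (y l)"
    by (auto simp: Y_def trop_mult_def)
  have "B i l0 + ereal (y l0) \<le> Y i"
    unfolding Y_def trop_mult_def using l0 by (intro SUP_upper) auto
  then have "B i l \<noteq> -\<infinity>" using l0(2) Yi by auto
  then obtain b :: int where b: "B i l = ereal (of_int b)"
    using B_int i l by (auto simp: trop_int_entry_def)
  have "A i j \<noteq> -\<infinity>" using Ai Yi b by auto
  then obtain a :: int where a: "A i j = ereal (of_int a)"
    using A_int i j by (auto simp: trop_int_entry_def)
  have "c = real_of_int (b - a) + y l" using Ai Yi a b by simp
  then show ?thesis using l by blast
qed

lemma bias_policy:
  assumes "\<forall>i<m. \<forall>j<n. trop_int_entry (A i j)" and "\<forall>i<m. \<forall>l<q. trop_int_entry (B i l)"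
    and "\<forall>j<n. \<exists>i<m. A i j \<noteq> -\<infinity>" and "\<forall>i<m. \<exists>l<q. B i l \<noteq> -\<infinity>"
    and bias: "is_bias (shapley_F A B P m n q) n v lam"
  obtains g r where "\<And>j. j < n \<Longrightarrow> g j < q"
    and "\<And>j. j < n \<Longrightarrow> lam + v j = real_of_int (r j) + mat_vec P n v (g j)"
proof -
  have "\<exists>l<q. \<exists>r::int. lam + v j = real_of_int r + mat_vec P n v l" if "j < n" for j
    using bias that unfolding is_bias_def shapley_F_def
    by (intro trop_adj_mult_value[OF assms(1-4) that]) blast
  then have "\<forall>j\<in>{..<n}. \<exists>lr. fst lr < q \<and> lam + v j = real_of_int (snd lr) + mat_vec P n v (fst lr)"
    by fastforce
  from bchoice[OF this] obtain f
    where "\<forall>j\<in>{..<n}. fst (f j) < q \<and> lam + v j = real_of_int (snd (f j)) + mat_vec P n v (fst (f j))"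
    by blast
  then show ?thesis using that[of "fst \<circ> f" "snd \<circ> f"] by simp
qed

theorem mainTheorem9:
  fixes A B :: "nat \<Rightarrow> nat \<Rightarrow> ereal" and P :: "nat \<Rightarrow> nat \<Rightarrow> real"
    and Q :: "nat \<Rightarrow> nat \<Rightarrow> int" and M :: nat and m n q :: nat
    and v :: "nat \<Rightarrow> real" and lam :: real
  assumes n_pos: "n > 0"
    and A_int: "\<forall>i<m. \<forall>j<n. trop_int_entry (A i j)"
    and B_int: "\<forall>i<m. \<forall>l<q. trop_int_entry (B i l)"
    and A_col: "\<forall>j<n. \<exists>i<m. A i j \<noteq> -\<infinity>"
    and B_row: "\<forall>i<m. \<exists>l<q. B i l \<noteq> -\<infinity>"
    and P_stoch: "row_stochastic P q n"
    and M_pos: "M > 0"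
    and P_Q: "\<forall>i<q. \<forall>l<n. P i l = real_of_int (Q i l) / real M"
    and bias: "is_bias (shapley_F A B P m n q) n v lam"
    and rho_nz: "lam \<noteq> 0"
  shows "1 / \<bar>lam\<bar> \<le> real n * real M ^ min (card (nondet_states P q n)) (n - 1)"
proof -
  obtain g r where g: "\<And>j. j < n \<Longrightarrow> g j < q"
    and policy: "\<And>j. j < n \<Longrightarrow> lam + v j = real_of_int (r j) + mat_vec P n v (g j)"
    using bias_policy[OF A_int B_int A_col B_row bias] by blast
  interpret rational_policy P Q M q n g r v lam
    using P_stoch M_pos P_Q g policy by unfold_locales auto
  show ?thesis
    using inverse_gain_le_inj inverse_gain_le_not_inj n_pos rho_nz by blast
qed

end
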